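(* Let $n\ge 5$, let $k$ be a positive integer, let $x\in[1,n]$ and let $(i,j)$ be a cell with $i,j\in[1,n]$. There exists a Latin square of order $n$ with inner distance $k$ if and only if there exists a Latin square $(m_{a,b})$ of order $n$ with inner distance $k$ and $m_{i,j}=x$.
   Context: Symbols are $[1,n]$. For $a,b\in[1,n]$, $\mathrm{dist}(a,b)$ is the minimum of the residues of $a-b$ and $b-a$ modulo $n$ (in $[0,n-1]$). A Latin square of order $n$ is an $n\times n$ matrix over $[1,n]$ with each symbol exactly once in every row and column; its inner distance is the minimum of $\mathrm{dist}$ over symbols in horizontally or vertically adjacent cells. *)

theory Defs
  imports Main
begin

definition cdist :: "nat \<Rightarrow> nat \<Rightarrow> nat \<Rightarrow> nat" where
  "cdist n a b = nat (min ((int a - int b) mod int n) ((int b - int a) mod int n))"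

definition latin_square :: "nat \<Rightarrow> (nat \<Rightarrow> nat \<Rightarrow> nat) \<Rightarrow> bool" where
  "latin_square n M \<longleftrightarrow>
     (\<forall>a\<in>{1..n}. \<forall>s\<in>{1..n}. \<exists>!b. b \<in> {1..n} \<and> M a b = s) \<and>
     (\<forall>b\<in>{1..n}. \<forall>s\<in>{1..n}. \<exists>!a. a \<in> {1..n} \<and> M a b = s) \<and>
     (\<forall>a\<in>{1..n}. \<forall>b\<in>{1..n}. M a b \<in> {1..n})"

definition inner_distance :: "nat \<Rightarrow> (nat \<Rightarrow> nat \<Rightarrow> nat) \<Rightarrow> nat" where
  "inner_distance n M = Min
     ({cdist n (M a b) (M a (b+1)) | a b. a \<in> {1..n} \<and> b \<in> {1..n} \<and> b + 1 \<le> n} \<union>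
      {cdist n (M a b) (M (a+1) b) | a b. a \<in> {1..n} \<and> b \<in> {1..n} \<and> a + 1 \<le> n})"

end

theory Submission
  imports Defs
begin

text \<open>Adding a constant modulo n to every entry of a Latin square permutes the symbols, so the
  result is again a Latin square, and it leaves every cyclic distance unchanged, so the inner
  distance is preserved. Adding x - m_{i,j} moves the symbol x into cell (i,j). This needs only
  n > 0.\<close>

definition rotate_symbol :: "nat \<Rightarrow> int \<Rightarrow> nat \<Rightarrow> nat" where
  "rotate_symbol n d s = nat ((int s - 1 + d) mod int n) + 1"

lemma int_rotate_symbol:
  "n > 0 \<Longrightarrow> int (rotate_symbol n d s) = (int s - 1 + d) mod int n + 1"
  by (simp add: rotate_symbol_def)

lemma rotate_symbol_in_range:
  assumes "n > 0"
  shows "rotate_symbol n d s \<in> {1..n}"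
proof -
  have "0 \<le> (int s - 1 + d) mod int n" and "(int s - 1 + d) mod int n < int n"
    using assms by simp_all
  then have "nat ((int s - 1 + d) mod int n) < n"
    by linarith
  then show ?thesis
    by (simp add: rotate_symbol_def)
qed

lemma rotate_symbol_eq_iff_cong:
  assumes "n > 0" and "t \<in> {1..n}"
  shows "rotate_symbol n d s = t \<longleftrightarrow> (int s + d) mod int n = int t mod int n"
proof -
  have "rotate_symbol n d s = t \<longleftrightarrow> (int s - 1 + d) mod int n = int t - 1"
    using int_rotate_symbol[OF \<open>n > 0\<close>, of d s] by linarith
  also have "int t - 1 = (int t - 1) mod int n"
    using assms by simp
  also have "(int s - 1 + d) mod int n = (int t - 1) mod int n
      \<longleftrightarrow> (int s + d) mod int n = int t mod int n"
    by (simp add: mod_eq_dvd_iff algebra_simps)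
  finally show ?thesis .
qed

lemma rotate_symbol_to: "n > 0 \<Longrightarrow> t \<in> {1..n} \<Longrightarrow> rotate_symbol n (int t - int s) s = t"
  by (simp add: rotate_symbol_eq_iff_cong)

lemma int_rotate_symbol_mod:
  "n > 0 \<Longrightarrow> int (rotate_symbol n d s) mod int n = (int s + d) mod int n"
  using rotate_symbol_eq_iff_cong[OF _ rotate_symbol_in_range] by metis

lemma rotate_symbol_rotate_symbol:
  assumes "n > 0"
  shows "rotate_symbol n d (rotate_symbol n e s) = rotate_symbol n (e + d) s"
proof -
  have "(int (rotate_symbol n e s) + d) mod int n = ((int s + e) mod int n + d) mod int n"
    by (metis int_rotate_symbol_mod[OF assms] mod_add_left_eq)
  also have "\<dots> = (int s + (e + d)) mod int n"
    by (simp add: mod_add_left_eq add.assoc)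
  finally show ?thesis
    by (simp add: rotate_symbol_eq_iff_cong[OF assms rotate_symbol_in_range[OF assms]]
        int_rotate_symbol_mod[OF assms])
qed

lemma bij_betw_rotate_symbol:
  assumes "n > 0"
  shows "bij_betw (rotate_symbol n d) {1..n} {1..n}"
proof (rule bij_betw_byWitness[where f' = "rotate_symbol n (- d)"])
  have "rotate_symbol n 0 s = s" if "s \<in> {1..n}" for s
    using rotate_symbol_eq_iff_cong[OF assms that] by simp
  then show "\<forall>s\<in>{1..n}. rotate_symbol n (- d) (rotate_symbol n d s) = s"
    and "\<forall>s\<in>{1..n}. rotate_symbol n d (rotate_symbol n (- d) s) = s"
    by (simp_all add: rotate_symbol_rotate_symbol[OF assms])
qed (use rotate_symbol_in_range[OF assms] in blast)+

lemma cdist_rotate_symbol: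
  assumes "n > 0"
  shows "cdist n (rotate_symbol n d a) (rotate_symbol n d b) = cdist n a b"
proof -
  have "(int (rotate_symbol n d u) - int (rotate_symbol n d v)) mod int n
      = ((int u + d) - (int v + d)) mod int n" for u v
    by (intro mod_diff_cong int_rotate_symbol_mod[OF assms])
  then show ?thesis
    by (simp add: cdist_def)
qed

lemma latin_square_permute_symbols:
  assumes \<sigma>: "bij_betw \<sigma> {1..n} {1..n}" and "latin_square n M"
  shows "latin_square n (\<lambda>a b. \<sigma> (M a b))"
proof -
  let ?\<tau> = "inv_into {1..n} \<sigma>"
  have M_rows: "\<And>a s. a \<in> {1..n} \<Longrightarrow> s \<in> {1..n} \<Longrightarrow> \<exists>!b. b \<in> {1..n} \<and> M a b = s"
    and M_columns: "\<And>b s. b \<in> {1..n} \<Longrightarrow> s \<in> {1..n} \<Longrightarrow> \<exists>!a. a \<in> {1..n} \<and> M a b = s"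
    and M_range: "\<And>a b. a \<in> {1..n} \<Longrightarrow> b \<in> {1..n} \<Longrightarrow> M a b \<in> {1..n}"
    using assms(2) unfolding latin_square_def by simp_all
  have \<tau>_range: "?\<tau> s \<in> {1..n}" if "s \<in> {1..n}" for s
    using \<sigma> that by (metis bij_betw_def inv_into_into)
  have permuted_iff: "\<sigma> (M a b) = s \<longleftrightarrow> M a b = ?\<tau> s"
    if "a \<in> {1..n}" "b \<in> {1..n}" "s \<in> {1..n}" for a b s
    using \<sigma> M_range[OF that(1,2)] that(3)
    by (metis bij_betw_inv_into_left bij_betw_inv_into_right)
  have rows: "\<exists>!b. b \<in> {1..n} \<and> \<sigma> (M a b) = s" if "a \<in> {1..n}" "s \<in> {1..n}" for a s
    using M_rows[OF that(1) \<tau>_range[OF that(2)]] that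
    by (simp add: permuted_iff cong: conj_cong)
  have columns: "\<exists>!a. a \<in> {1..n} \<and> \<sigma> (M a b) = s" if "b \<in> {1..n}" "s \<in> {1..n}" for b s
    using M_columns[OF that(1) \<tau>_range[OF that(2)]] that
    by (simp add: permuted_iff cong: conj_cong)
  show ?thesis
    unfolding latin_square_def
    by (intro conjI ballI rows columns bij_betw_apply[OF \<sigma> M_range])
qed

lemma inner_distance_cdist_isometry:
  assumes "latin_square n M"
    and isometry: "\<And>u v. u \<in> {1..n} \<Longrightarrow> v \<in> {1..n} \<Longrightarrow> cdist n (\<sigma> u) (\<sigma> v) = cdist n u v"
  shows "inner_distance n (\<lambda>a b. \<sigma> (M a b)) = inner_distance n M"
proof -
  have M_range: "M a b \<in> {1..n}" if "a \<in> {1..n}" "b \<in> {1..n}" for a b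
    using assms(1) that by (simp add: latin_square_def)
  have preserved: "cdist n (\<sigma> (M a b)) (\<sigma> (M a' b')) = cdist n (M a b) (M a' b')"
    if "a \<in> {1..n}" "b \<in> {1..n}" "a' \<in> {1..n}" "b' \<in> {1..n}" for a b a' b'
    using isometry M_range that by blast
  have "{cdist n (\<sigma> (M a b)) (\<sigma> (M a (b+1))) | a b. a \<in> {1..n} \<and> b \<in> {1..n} \<and> b + 1 \<le> n}
      = {cdist n (M a b) (M a (b+1)) | a b. a \<in> {1..n} \<and> b \<in> {1..n} \<and> b + 1 \<le> n}"
    by (force simp: preserved)
  moreover have "{cdist n (\<sigma> (M a b)) (\<sigma> (M (a+1) b)) | a b. a \<in> {1..n} \<and> b \<in> {1..n} \<and> a + 1 \<le> n}
      = {cdist n (M a b) (M (a+1) b) | a b. a \<in> {1..n} \<and> b \<in> {1..n} \<and> a + 1 \<le> n}"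
    by (force simp: preserved)
  ultimately show ?thesis
    unfolding inner_distance_def by simp
qed

theorem mainTheorem11:
  fixes n k x i j :: nat
  assumes "n \<ge> 5" and "k > 0"
    and "x \<in> {1..n}" and "i \<in> {1..n}" and "j \<in> {1..n}"
  shows "(\<exists>M. latin_square n M \<and> inner_distance n M = k) \<longleftrightarrow>
         (\<exists>M. latin_square n M \<and> inner_distance n M = k \<and> M i j = x)"
proof
  assume "\<exists>M. latin_square n M \<and> inner_distance n M = k"
  then obtain M where M: "latin_square n M" "inner_distance n M = k"
    by blast
  have "n > 0"
    using assms(1) by simp
  define \<sigma> where "\<sigma> = rotate_symbol n (int x - int (M i j))"
  have "latin_square n (\<lambda>a b. \<sigma> (M a b))"
    unfolding \<sigma>_def using bij_betw_rotate_symbol[OF \<open>n > 0\<close>] M(1)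
    by (rule latin_square_permute_symbols)
  moreover have "inner_distance n (\<lambda>a b. \<sigma> (M a b)) = k"
    unfolding \<sigma>_def inner_distance_cdist_isometry[OF M(1) cdist_rotate_symbol[OF \<open>n > 0\<close>]]
    by (rule M(2))
  moreover have "\<sigma> (M i j) = x"
    unfolding \<sigma>_def using \<open>n > 0\<close> assms(3) by (rule rotate_symbol_to)
  ultimately show "\<exists>M. latin_square n M \<and> inner_distance n M = k \<and> M i j = x"
    by blast
qed blast

end
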